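(* Let $P$ be a complex polynomial of degree $m\ge1$ and let $B\in C^\infty(\mathbb{R},\mathbb{C})$ be constant outside a compact set and such that $\operatorname{Range}(B)\cap P(\{z\in\mathbb{C}:P'(z)=0\})=\emptyset$. Then there exists $g\in C^\infty(\mathbb{R},\mathbb{C})$ with $P\circ g=B$. *)

theory Defs
  imports "HOL-Analysis.Analysis" "HOL-Computational_Algebra.Polynomial"
begin

definition smooth_real_complex :: "(real \<Rightarrow> complex) \<Rightarrow> bool" where
  "smooth_real_complex f \<longleftrightarrow>
     (\<exists>D :: nat \<Rightarrow> real \<Rightarrow> complex. D 0 = f \<and>
        (\<forall>n t. (D n has_vector_derivative D (Suc n) t) (at t)))"

end

theory Submission
  imports Defs "HOL-Complex_Analysis.Complex_Analysis" "HOL-Computational_Algebra.Fundamental_Theorem_Algebra"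
begin

text \<open>Off its critical values a nonconstant polynomial is a local biholomorphism with finite
fibres and compact preimages of compact sets, hence a covering map. As the real line is simply
connected, B lifts continuously through this covering, and near every point the lift is B
composed with a holomorphic inverse branch of P, hence smooth.\<close>

definition vderiv :: "(real \<Rightarrow> 'a::real_normed_vector) \<Rightarrow> real \<Rightarrow> 'a" where
  "vderiv f = (\<lambda>t. vector_derivative f (at t))"

text \<open>The finite order k is what makes inductive proofs of closure properties possible.\<close>

definition higher_differentiable_on :: "nat \<Rightarrow> real set \<Rightarrow> (real \<Rightarrow> 'a::real_normed_vector) \<Rightarrow> bool" where
  "higher_differentiable_on k N f \<longleftrightarrow> (\<forall>j\<le>k. \<forall>t\<in>N. (vderiv ^^ j) f differentiable (at t))"

lemma vderiv_at: "(f has_vector_derivative f') (at t) \<Longrightarrow> vderiv f t = f'"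
  unfolding vderiv_def by (rule vector_derivative_at)

lemma has_vector_derivative_vderiv: "f differentiable (at t) \<Longrightarrow> (f has_vector_derivative vderiv f t) (at t)"
  unfolding vderiv_def by (rule vector_derivative_works[THEN iffD1])

lemma vderiv_cong_open:
  assumes "open N" "\<And>t. t \<in> N \<Longrightarrow> f t = g t" "t \<in> N"
  shows "vderiv f t = vderiv g t"
proof -
  have "(f has_vector_derivative D) (at t) \<longleftrightarrow> (g has_vector_derivative D) (at t)" for D
    using has_vector_derivative_transform_within_open[OF _ assms(1,3), of f D g]
      has_vector_derivative_transform_within_open[OF _ assms(1,3), of g D f] assms(2) by auto
  then show ?thesis unfolding vderiv_def vector_derivative_def by simp
qed

lemma differentiable_cong_open:
  fixes f g :: "real \<Rightarrow> 'a::real_normed_vector"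
  assumes "open N" "\<And>t. t \<in> N \<Longrightarrow> f t = g t" "t \<in> N" "f differentiable (at t)"
  shows "g differentiable (at t)"
  using has_vector_derivative_transform_within_open[OF has_vector_derivative_vderiv[OF assms(4)] assms(1,3), of g]
    assms(2) differentiableI_vector by metis

lemma higher_differentiable_on_0:
  "higher_differentiable_on 0 N f \<longleftrightarrow> (\<forall>t\<in>N. f differentiable (at t))"
  by (simp add: higher_differentiable_on_def)

lemma higher_differentiable_on_Suc:
  "higher_differentiable_on (Suc k) N f \<longleftrightarrow>
     (\<forall>t\<in>N. f differentiable (at t)) \<and> higher_differentiable_on k N (vderiv f)"
proof -
  have "(\<forall>j\<le>Suc k. Q j) \<longleftrightarrow> Q 0 \<and> (\<forall>j\<le>k. Q (Suc j))" for Q :: "nat \<Rightarrow> bool"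
    by (metis Suc_le_mono le0 not0_implies_Suc)
  then show ?thesis
    unfolding higher_differentiable_on_def by (simp add: funpow_swap1)
qed

lemma higher_differentiable_on_cong_open:
  assumes "open N" "\<And>t. t \<in> N \<Longrightarrow> f t = g t" "higher_differentiable_on k N f"
  shows "higher_differentiable_on k N g"
  using assms(2,3)
proof (induction k arbitrary: f g)
  case 0
  then show ?case
    using differentiable_cong_open[OF assms(1) 0(1)] by (auto simp: higher_differentiable_on_0)
next
  case (Suc k)
  then have "\<forall>t\<in>N. g differentiable (at t)"
    using differentiable_cong_open[OF assms(1) Suc.prems(1)] by (auto simp: higher_differentiable_on_Suc)
  moreover have "higher_differentiable_on k N (vderiv g)"
    using Suc.IH[of "vderiv f" "vderiv g"] vderiv_cong_open[OF assms(1) Suc.prems(1)] Suc.prems(2)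
    by (auto simp: higher_differentiable_on_Suc)
  ultimately show ?case by (simp add: higher_differentiable_on_Suc)
qed

lemma higher_differentiable_on_add:
  fixes u v :: "real \<Rightarrow> 'a::real_normed_vector"
  assumes "open N" "higher_differentiable_on k N u" "higher_differentiable_on k N v"
  shows "higher_differentiable_on k N (\<lambda>t. u t + v t)"
  using assms(2,3)
proof (induction k arbitrary: u v)
  case 0
  then show ?case by (auto simp: higher_differentiable_on_0)
next
  case (Suc k)
  then have du: "\<forall>t\<in>N. u differentiable (at t)" and dv: "\<forall>t\<in>N. v differentiable (at t)"
    by (auto simp: higher_differentiable_on_Suc)
  have "vderiv u t + vderiv v t = vderiv (\<lambda>t. u t + v t) t" if "t \<in> N" for t
    using du dv that by (simp add: vderiv_def)
  moreover have "higher_differentiable_on k N (\<lambda>t. vderiv u t + vderiv v t)"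
    using Suc by (simp add: higher_differentiable_on_Suc)
  ultimately have "higher_differentiable_on k N (vderiv (\<lambda>t. u t + v t))"
    by (rule higher_differentiable_on_cong_open[OF assms(1)])
  then show ?case
    using du dv by (simp add: higher_differentiable_on_Suc)
qed

lemma higher_differentiable_on_mult:
  fixes u v :: "real \<Rightarrow> 'a::real_normed_algebra"
  assumes "open N" "higher_differentiable_on k N u" "higher_differentiable_on k N v"
  shows "higher_differentiable_on k N (\<lambda>t. u t * v t)"
  using assms(2,3)
proof (induction k arbitrary: u v)
  case 0
  then show ?case by (auto simp: higher_differentiable_on_0)
next
  case (Suc k)
  then have du: "\<forall>t\<in>N. u differentiable (at t)" and dv: "\<forall>t\<in>N. v differentiable (at t)"
    by (auto simp: higher_differentiable_on_Suc)
  have "higher_differentiable_on k N u" "higher_differentiable_on k N v"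
    using Suc.prems by (auto simp: higher_differentiable_on_def)
  then have "higher_differentiable_on k N (\<lambda>t. u t * vderiv v t + vderiv u t * v t)"
    using Suc by (intro higher_differentiable_on_add assms(1)) (auto simp: higher_differentiable_on_Suc)
  with _ have "higher_differentiable_on k N (vderiv (\<lambda>t. u t * v t))"
  proof (rule higher_differentiable_on_cong_open[OF assms(1)])
    show "u t * vderiv v t + vderiv u t * v t = vderiv (\<lambda>t. u t * v t) t" if "t \<in> N" for t
      using du dv that by (simp add: vderiv_def)
  qed
  then show ?case
    using du dv by (auto simp: higher_differentiable_on_Suc)
qed

lemma higher_differentiable_on_imp_differentiable:
  "higher_differentiable_on k N f \<Longrightarrow> t \<in> N \<Longrightarrow> f differentiable (at t)"
  unfolding higher_differentiable_on_def by force

lemma higher_differentiable_on_compose_holomorphic: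
  assumes "open N" "open A" "h holomorphic_on A" "f ` N \<subseteq> A" "higher_differentiable_on k N f"
  shows "higher_differentiable_on k N (\<lambda>t. h (f t))"
proof -
  have f_diff: "f differentiable (at t)" if "t \<in> N" for t
    using assms(5) that by (rule higher_differentiable_on_imp_differentiable)
  have chain: "((\<lambda>t. h (f t)) has_vector_derivative vderiv f t * deriv h (f t)) (at t)"
    if "h holomorphic_on A" "t \<in> N" for h t
    using field_vector_diff_chain_at[OF has_vector_derivative_vderiv[OF f_diff] holomorphic_derivI[OF that(1) assms(2)]]
      that(2) assms(4) by (auto simp: o_def)
  show ?thesis
    using assms(3,5)
  proof (induction k arbitrary: h)
    case 0
    then show ?case
      using chain differentiableI_vector by (fastforce simp: higher_differentiable_on_0)
  next
    case (Suc k)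
    have "higher_differentiable_on k N (\<lambda>t. deriv h (f t))"
      using Suc holomorphic_deriv[OF Suc.prems(1) assms(2)] by (auto simp: higher_differentiable_on_def)
    then have "higher_differentiable_on k N (\<lambda>t. vderiv f t * deriv h (f t))"
      using Suc.prems(2) by (intro higher_differentiable_on_mult assms(1)) (auto simp: higher_differentiable_on_Suc)
    then have "higher_differentiable_on k N (vderiv (\<lambda>t. h (f t)))"
      by (rule higher_differentiable_on_cong_open[OF assms(1), rotated])
         (use vderiv_at[OF chain[OF Suc.prems(1)]] in simp)
    then show ?case
      using chain[OF Suc.prems(1)] differentiableI_vector by (auto simp: higher_differentiable_on_Suc)
  qed
qed

lemma smooth_real_complex_iff_higher_differentiable:
  "smooth_real_complex f \<longleftrightarrow> (\<forall>k. higher_differentiable_on k UNIV f)"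
proof
  assume "smooth_real_complex f"
  then obtain D where D: "D 0 = f" "\<And>n t. (D n has_vector_derivative D (Suc n) t) (at t)"
    unfolding smooth_real_complex_def by blast
  have "(vderiv ^^ n) f = D n" for n
    by (induction n) (auto simp: D(1) vderiv_at[OF D(2)])
  then show "\<forall>k. higher_differentiable_on k UNIV f"
    unfolding higher_differentiable_on_def using D(2) differentiableI_vector by metis
next
  assume "\<forall>k. higher_differentiable_on k UNIV f"
  then show "smooth_real_complex f"
    unfolding smooth_real_complex_def higher_differentiable_on_def
    by (intro exI[of _ "\<lambda>n. (vderiv ^^ n) f"]) (auto intro: has_vector_derivative_vderiv)
qed

lemma degree_diff_const:
  fixes P :: "'a::ab_group_add poly"
  assumes "degree P \<ge> 1"
  shows "degree (P - [:c:]) = degree P"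
proof -
  have "P - [:c:] = P + [:-c:]"
    by (simp add: diff_conv_add_uminus)
  then show ?thesis
    using degree_add_eq_left[of "[:-c:]" P] assms by (simp only:) simp
qed

lemma finite_poly_fibre:
  fixes P :: "'a::idom poly"
  assumes "degree P \<ge> 1"
  shows "finite {z. poly P z = c}"
proof -
  have "P - [:c:] \<noteq> 0"
    using degree_diff_const[OF assms, of c] assms by auto
  then show ?thesis
    using poly_roots_finite[of "P - [:c:]"] by simp
qed

lemma poly_surjective:
  fixes P :: "complex poly"
  assumes "degree P \<ge> 1"
  obtains z where "poly P z = c"
proof -
  have "\<not> constant (poly (P - [:c:]))"
    using degree_diff_const[OF assms, of c] assms by (simp add: constant_degree)
  then obtain z where "poly (P - [:c:]) z = 0"
    using fundamental_theorem_of_algebra by blast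
  then show ?thesis using that by simp
qed

lemma compact_poly_preimage:
  fixes P :: "'a::{real_normed_field,heine_borel} poly"
  assumes "degree P \<ge> 1" "compact K"
  shows "compact {z. poly P z \<in> K}"
proof -
  have "P \<noteq> 0" using assms(1) by auto
  then show ?thesis
    using proper_map_polyfun_univ[OF assms(2), of "coeff P" "degree P" "degree P"] assms(1)
    by (simp add: poly_altdef)
qed

lemma finite_separating_radius:
  fixes Z :: "'a::metric_space set"
  assumes "finite Z" "\<And>z. z \<in> Z \<Longrightarrow> \<rho> z > 0"
  obtains r where "r > 0" "\<And>z. z \<in> Z \<Longrightarrow> r \<le> \<rho> z"
    "\<And>z w. z \<in> Z \<Longrightarrow> w \<in> Z \<Longrightarrow> z \<noteq> w \<Longrightarrow> ball z r \<inter> ball w r = {}"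
proof -
  define R where "R = insert 1 (\<rho> ` Z \<union> (\<lambda>(z, w). dist z w / 2) ` {(z, w) \<in> Z \<times> Z. z \<noteq> w})"
  have "finite {(z, w) \<in> Z \<times> Z. z \<noteq> w}"
    using assms(1) by (auto intro: finite_subset[of _ "Z \<times> Z"])
  then have R: "finite R" "\<forall>x\<in>R. x > 0"
    using assms by (auto simp: R_def)
  define r where "r = Min R"
  have "r > 0" "\<And>x. x \<in> R \<Longrightarrow> r \<le> x"
    using R by (auto simp: r_def R_def)
  moreover have "ball z r \<inter> ball w r = {}" if "z \<in> Z" "w \<in> Z" "z \<noteq> w" for z w
  proof -
    have "r \<le> dist z w / 2"
      using that by (intro \<open>\<And>x. x \<in> R \<Longrightarrow> r \<le> x\<close>) (force simp: R_def)
    have False if "x \<in> ball z r" "x \<in> ball w r" for x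
      using that dist_triangle[of z w x] \<open>r \<le> dist z w / 2\<close> by (simp add: dist_commute)
    then show ?thesis by blast
  qed
  ultimately show ?thesis
    using that by (auto simp: R_def)
qed

lemma proper_map_near_fibre:
  fixes p :: "'a::metric_space \<Rightarrow> 'b::heine_borel"
  assumes "continuous_on UNIV p" "\<And>K. compact K \<Longrightarrow> compact {x. p x \<in> K}"
    and "open U" "{x. p x = y} \<subseteq> U"
  obtains \<delta> where "\<delta> > 0" "\<And>x. dist (p x) y < \<delta> \<Longrightarrow> x \<in> U"
proof -
  define K where "K = {x. p x \<in> cball y 1} - U"
  have "compact K"
    unfolding K_def using assms(2)[OF compact_cball] assms(3) by (intro compact_diff)
  show ?thesis
  proof (cases "K = {}")
    case True
    then have "x \<in> U" if "dist (p x) y < 1" for x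
      using that by (auto simp: K_def dist_commute)
    then show ?thesis
      using that[of 1] by simp
  next
    case False
    have "continuous_on K (\<lambda>x. dist (p x) y)"
      using assms(1) by (intro continuous_intros) (auto intro: continuous_on_subset)
    then obtain x0 where x0: "x0 \<in> K" "\<And>x. x \<in> K \<Longrightarrow> dist (p x0) y \<le> dist (p x) y"
      using continuous_attains_inf[OF \<open>compact K\<close> False] by blast
    have "p x0 \<noteq> y"
      using x0(1) assms(4) by (auto simp: K_def)
    moreover have "x \<in> U" if "dist (p x) y < min 1 (dist (p x0) y)" for x
    proof (rule ccontr)
      assume "x \<notin> U"
      then have "x \<in> K" using that by (auto simp: K_def dist_commute)
      then show False using x0(2) that by fastforce
    qed
    ultimately show ?thesis
      using that[of "min 1 (dist (p x0) y)"] by simp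
  qed
qed

lemma holomorphic_on_poly: "poly P holomorphic_on A"
  using poly_holomorphic_on[of "\<lambda>z. z" A P] by simp

lemma holomorphic_inj_on_homeomorphism:
  assumes "p holomorphic_on U" "open U" "inj_on p U"
  obtains q where "homeomorphism U (p ` U) p q"
proof -
  obtain q where q: "q holomorphic_on p ` U" "\<And>z. z \<in> U \<Longrightarrow> q (p z) = z"
    using holomorphic_has_inverse[OF assms] by metis
  have "homeomorphism U (p ` U) p q"
    unfolding homeomorphism_def
    using q holomorphic_on_imp_continuous_on[OF assms(1)] holomorphic_on_imp_continuous_on[OF q(1)]
    by (auto simp: image_image)
  then show ?thesis using that by blast
qed

text \<open>Around each point of the fibre take a ball on which p is injective, with the balls
pairwise disjoint; properness forces every point mapped close enough to y into one of them.\<close>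

lemma holomorphic_proper_evenly_covered:
  fixes p :: "complex \<Rightarrow> complex"
  assumes holp: "p holomorphic_on UNIV" and proper: "\<And>K. compact K \<Longrightarrow> compact {x. p x \<in> K}"
    and fin: "finite {z. p z = y}" and dnz: "\<And>z. p z = y \<Longrightarrow> deriv p z \<noteq> 0"
    and "open S" "y \<in> S"
  obtains T v where "y \<in> T" "open T" "T \<subseteq> S" "\<Union>v = p -` T" "\<And>u. u \<in> v \<Longrightarrow> open u"
    "pairwise disjnt v" "\<And>u. u \<in> v \<Longrightarrow> \<exists>q. homeomorphism u T p q"
proof -
  define Z where "Z = {z. p z = y}"
  have "\<exists>\<rho>>0. inj_on p (ball z \<rho>)" if "z \<in> Z" for z
    using has_complex_derivative_locally_injective[OF holp _ open_UNIV dnz] that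
    unfolding Z_def by (metis UNIV_I mem_Collect_eq)
  then obtain \<rho> where \<rho>: "\<And>z. z \<in> Z \<Longrightarrow> \<rho> z > 0 \<and> inj_on p (ball z (\<rho> z))"
    by metis
  then obtain r where r: "r > 0" "\<And>z. z \<in> Z \<Longrightarrow> r \<le> \<rho> z"
    "\<And>z w. z \<in> Z \<Longrightarrow> w \<in> Z \<Longrightarrow> z \<noteq> w \<Longrightarrow> ball z r \<inter> ball w r = {}"
    using finite_separating_radius[of Z \<rho>] fin unfolding Z_def by blast
  have inj: "inj_on p (ball z r)" if "z \<in> Z" for z
    using \<rho>[OF that] r(2)[OF that] by (meson inj_on_subset subset_ball)
  have "\<exists>e>0. ball y e \<subseteq> p ` ball z r" if "z \<in> Z" for z
  proof -
    have "open (p ` ball z r)"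
      using open_mapping_thm3[OF holomorphic_on_subset[OF holp] _ inj[OF that]] by simp
    moreover have "y \<in> p ` ball z r"
      using that r(1) unfolding Z_def by force
    ultimately show ?thesis by (rule open_contains_ball_eq[THEN iffD1, rule_format])
  qed
  then obtain e where e: "\<And>z. z \<in> Z \<Longrightarrow> e z > 0 \<and> ball y (e z) \<subseteq> p ` ball z r"
    by metis
  have "open (\<Union>z\<in>Z. ball z r)" "{x. p x = y} \<subseteq> (\<Union>z\<in>Z. ball z r)"
    using r(1) by (auto simp: Z_def)
  then obtain \<delta> where \<delta>: "\<delta> > 0" "\<And>x. dist (p x) y < \<delta> \<Longrightarrow> x \<in> (\<Union>z\<in>Z. ball z r)"
    using proper_map_near_fibre[OF holomorphic_on_imp_continuous_on[OF holp] proper] by blast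
  obtain e0 where "e0 > 0" "ball y e0 \<subseteq> S"
    using \<open>open S\<close> \<open>y \<in> S\<close> open_contains_ball by blast
  define \<epsilon> where "\<epsilon> = Min (insert \<delta> (insert e0 (e ` Z)))"
  have fZ: "finite Z" using fin by (simp add: Z_def)
  have "\<epsilon> > 0"
    unfolding \<epsilon>_def using fZ e \<delta>(1) \<open>e0 > 0\<close> by (auto simp: Min_gr_iff)
  have "\<epsilon> \<le> \<delta>" "\<epsilon> \<le> e0" and \<epsilon>_le_e: "\<And>z. z \<in> Z \<Longrightarrow> \<epsilon> \<le> e z"
    unfolding \<epsilon>_def using fZ by (auto simp: min_le_iff_disj Min_le_iff)
  define T where "T = ball y \<epsilon>"
  define v where "v = (\<lambda>z. ball z r \<inter> p -` T) ` Z"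
  have "open (p -` T)"
    unfolding T_def by (rule open_vimage[OF open_ball holomorphic_on_imp_continuous_on[OF holp]])
  show ?thesis
  proof (rule that[of T v])
    show "y \<in> T" "open T"
      using \<open>\<epsilon> > 0\<close> by (auto simp: T_def)
    show "T \<subseteq> S"
      using \<open>ball y e0 \<subseteq> S\<close> \<open>\<epsilon> \<le> e0\<close> unfolding T_def by (meson order_trans subset_ball)
    have "x \<in> \<Union>v" if "p x \<in> T" for x
    proof -
      have "dist (p x) y < \<delta>"
        using that \<open>\<epsilon> \<le> \<delta>\<close> by (simp add: T_def dist_commute)
      then obtain z where "z \<in> Z" "x \<in> ball z r"
        using \<delta>(2) by blast
      then show ?thesis
        using that by (auto simp: v_def)
    qed
    then show "\<Union>v = p -` T"
      by (auto simp: v_def)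
    show "open u" if "u \<in> v" for u
      using that \<open>open (p -` T)\<close> by (auto simp: v_def)
    show "pairwise disjnt v"
      unfolding v_def using r(3) by (auto simp: pairwise_def disjnt_def)
    show "\<exists>q. homeomorphism u T p q" if "u \<in> v" for u
    proof -
      obtain z where z: "z \<in> Z" and u: "u = ball z r \<inter> p -` T"
        using \<open>u \<in> v\<close> unfolding v_def by blast
      have "T \<subseteq> p ` ball z r"
        using e[OF z] \<epsilon>_le_e[OF z] unfolding T_def by (meson order_trans subset_ball)
      then have "p ` u = T" unfolding u by blast
      moreover have "open u" "inj_on p u"
        using \<open>open (p -` T)\<close> inj[OF z] by (auto simp: u intro: inj_on_subset)
      then obtain q where "homeomorphism u (p ` u) p q"
        using holomorphic_inj_on_homeomorphism[OF holomorphic_on_subset[OF holp subset_UNIV]] by metis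
      ultimately show ?thesis by metis
    qed
  qed
qed

lemma open_noncritical_values:
  fixes P :: "complex poly"
  assumes "degree P \<ge> 1"
  shows "open (- poly P ` {z. poly (pderiv P) z = 0})"
proof -
  have "pderiv P \<noteq> 0"
    using assms by (auto simp: pderiv_eq_0_iff)
  then show ?thesis
    by (intro open_Compl finite_imp_closed finite_imageI poly_roots_finite)
qed

lemma poly_covering_space:
  fixes P :: "complex poly"
  assumes deg: "degree P \<ge> 1"
  defines "S \<equiv> - poly P ` {z. poly (pderiv P) z = 0}"
  shows "covering_space (poly P -` S) (poly P) S"
proof
  show "continuous_on (poly P -` S) (poly P)"
    by (intro continuous_intros)
  show "poly P ` (poly P -` S) = S"
    using poly_surjective[OF deg] by (metis surj_def image_vimage_eq inf_top.right_neutral)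
  fix y assume "y \<in> S"
  have dnz: "deriv (poly P) z \<noteq> 0" if "poly P z = y" for z
    using \<open>y \<in> S\<close> that by (auto simp: S_def DERIV_imp_deriv[OF poly_DERIV])
  obtain T v where T: "y \<in> T" "open T" "T \<subseteq> S" and v: "\<Union>v = poly P -` T" "\<And>u. u \<in> v \<Longrightarrow> open u"
    "pairwise disjnt v" "\<And>u. u \<in> v \<Longrightarrow> \<exists>q. homeomorphism u T (poly P) q"
    using holomorphic_proper_evenly_covered[OF holomorphic_on_poly compact_poly_preimage[OF deg]
        finite_poly_fibre[OF deg] dnz open_noncritical_values[OF deg, folded S_def] \<open>y \<in> S\<close>]
    by metis
  show "\<exists>T. y \<in> T \<and> openin (top_of_set S) T \<and>
          (\<exists>v. \<Union>v = poly P -` S \<inter> poly P -` T \<and> (\<forall>u\<in>v. openin (top_of_set (poly P -` S)) u) \<and>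
          pairwise disjnt v \<and> (\<forall>u\<in>v. \<exists>q. homeomorphism u T (poly P) q))"
  proof (intro exI conjI)
    show "openin (top_of_set S) T"
      using T(3,2) by (rule open_subset)
    show "\<Union>v = poly P -` S \<inter> poly P -` T"
      using v(1) T(3) by blast
    show "\<forall>u\<in>v. openin (top_of_set (poly P -` S)) u"
      using v(1,2) T(3) by (blast intro: open_subset)
  qed (use T(1) v(3,4) in auto)
qed

lemma smooth_real_complex_covering_lift:
  assumes cov: "covering_space C p S" and "open C" "p holomorphic_on C"
    and contg: "continuous_on UNIV g" and gC: "g \<in> UNIV \<rightarrow> C"
    and pg: "\<And>t. p (g t) = f t" and f: "smooth_real_complex f"
  shows "smooth_real_complex g"
  unfolding smooth_real_complex_iff_higher_differentiable
proof
  fix k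
  have "higher_differentiable_on k {t0} g" for t0
  proof -
    obtain T u q where T: "g t0 \<in> T" "openin (top_of_set C) T" and hom: "homeomorphism T u p q"
      using covering_space_local_homeomorphism[OF cov funcset_mem[OF gC UNIV_I]] by metis
    have "open T" using openin_open_trans[OF T(2) \<open>open C\<close>] .
    have "inj_on p T" using hom unfolding homeomorphism_def by (metis inj_on_inverseI)
    have "p holomorphic_on T"
      using holomorphic_on_subset[OF assms(3) openin_imp_subset[OF T(2)]] .
    obtain q' where q': "q' holomorphic_on p ` T" "\<And>z. z \<in> T \<Longrightarrow> q' (p z) = z"
      using holomorphic_has_inverse[OF \<open>p holomorphic_on T\<close> \<open>open T\<close> \<open>inj_on p T\<close>] by metis
    have "open (p ` T)"
      using open_mapping_thm3[OF \<open>p holomorphic_on T\<close> \<open>open T\<close> \<open>inj_on p T\<close>] .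
    define N where "N = g -` T"
    have "open N"
      unfolding N_def using \<open>open T\<close> contg by (simp add: continuous_on_open_vimage)
    have "f ` N \<subseteq> p ` T"
      by (auto simp: N_def simp flip: pg)
    moreover have "higher_differentiable_on k N f"
      using f by (auto simp: smooth_real_complex_iff_higher_differentiable higher_differentiable_on_def)
    ultimately have "higher_differentiable_on k N (\<lambda>t. q' (f t))"
      by (rule higher_differentiable_on_compose_holomorphic[OF \<open>open N\<close> \<open>open (p ` T)\<close> q'(1)])
    then have "higher_differentiable_on k N g"
      by (rule higher_differentiable_on_cong_open[OF \<open>open N\<close>, rotated]) (simp add: N_def q'(2) flip: pg)
    moreover have "t0 \<in> N" using T(1) by (simp add: N_def)
    ultimately show ?thesis by (auto simp: higher_differentiable_on_def)
  qed
  then show "higher_differentiable_on k UNIV g"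
    unfolding higher_differentiable_on_def by blast
qed

theorem lemma19:
  fixes P :: "complex poly" and B :: "real \<Rightarrow> complex"
  assumes "degree P \<ge> 1"
    and "smooth_real_complex B"
    and "\<exists>K c. compact K \<and> (\<forall>t. t \<notin> K \<longrightarrow> B t = c)"
    and "range B \<inter> poly P ` {z. poly (pderiv P) z = 0} = {}"
  shows "\<exists>g. smooth_real_complex g \<and> (\<forall>t. poly P (g t) = B t)"
proof -
  define S where "S = - poly P ` {z. poly (pderiv P) z = 0}"
  have cov: "covering_space (poly P -` S) (poly P) S"
    unfolding S_def using assms(1) by (rule poly_covering_space)
  have "open (poly P -` S)"
    unfolding S_def using open_noncritical_values[OF assms(1)]
    by (rule open_vimage) (rule holomorphic_on_imp_continuous_on[OF holomorphic_on_poly])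
  have "higher_differentiable_on 0 UNIV B"
    using assms(2) smooth_real_complex_iff_higher_differentiable by blast
  then have "B differentiable (at t)" for t
    by (rule higher_differentiable_on_imp_differentiable) simp
  then have "isCont B t" for t
    by (rule differentiable_imp_continuous_within)
  then have "continuous_on UNIV B"
    by (simp add: continuous_at_imp_continuous_on)
  moreover have "B \<in> UNIV \<rightarrow> S"
    using assms(4) by (auto simp: S_def)
  ultimately obtain g where g: "continuous_on UNIV g" "g \<in> UNIV \<rightarrow> poly P -` S"
    and lift: "\<And>t. t \<in> UNIV \<Longrightarrow> poly P (g t) = B t"
    by (rule covering_space_lift[OF cov convex_imp_simply_connected[OF convex_UNIV]
        convex_imp_locally_path_connected[OF convex_UNIV]]) blast
  have "smooth_real_complex g"
    by (rule smooth_real_complex_covering_lift[OF cov \<open>open (poly P -` S)\<close> holomorphic_on_poly g lift[OF UNIV_I] assms(2)])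
  then show ?thesis
    using lift by blast
qed

end
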